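(* Let $R$ be a monad on Sets and $LM$ a left $R$-module with values in Sets. Let $C\subset\coprod_{n}\prod_{i=0}^{n-1}LM([i])$, $\widetilde C\subset\coprod_n(\prod_{i=0}^nLM([i]))\times R([n])$, $Ceq\subset\coprod_n(\prod_{i=0}^{n-1}LM([i]))\times LM([n])^2$ and $\widetilde{Ceq}\subset\coprod_n(\prod_{i=0}^nLM([i]))\times R([n])^2$ be subsets satisfying the following conditions, for all sequences and elements for which the expressions are well formed (with $i=l(\Gamma_1)$ and $n=l(\Gamma)$): (1) $C,\widetilde C$ satisfy: (1.1) $(\rhd)$; (1.2) $(\Gamma,T\rhd)\Rightarrow(\Gamma\rhd)$; (1.3) $(\Gamma\vdash r:R)\Rightarrow(\Gamma,R\rhd)$; (1.4) $(\Gamma,T\rhd)\wedge(\Gamma,\Delta\vdash r:R)\Rightarrow(\Gamma,T,t_{n+1}\Delta\vdash t_{n+1}r:t_{n+1}R)$; (1.5) $(\Gamma\vdash s:S)\wedge(\Gamma,S,\Delta\vdash r:R)\Rightarrow(\Gamma,s_{n+1}(\Delta[s/n+1])\vdash s_{n+1}(r[s/n+1]):s_{n+1}(R[s/n+1]))$; (1.6) $(\Gamma,T\rhd)\Rightarrow(\Gamma,T\vdash n+1:t_{n+1}T)$; (2a) $(\Gamma\vdash T=T')\Rightarrow(\Gamma,T\rhd)$; (2b) $(\Gamma,T\rhd)\Rightarrow(\Gamma\vdash T=T)$; (2c) $(\Gamma\vdash T=T')\Rightarrow(\Gamma\vdash T'=T)$; (2d) $(\Gamma\vdash T=T')\wedge(\Gamma\vdash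 T'=T'')\Rightarrow(\Gamma\vdash T=T'')$; (3a) $(\Gamma\vdash o=o':T)\Rightarrow(\Gamma\vdash o:T)$; (3b) $(\Gamma\vdash o:T)\Rightarrow(\Gamma\vdash o=o:T)$; (3c) $(\Gamma\vdash o=o':T)\Rightarrow(\Gamma\vdash o'=o:T)$; (3d) $(\Gamma\vdash o=o':T)\wedge(\Gamma\vdash o'=o'':T)\Rightarrow(\Gamma\vdash o=o'':T)$; (4a) $(\Gamma_1\vdash T=T')\wedge(\Gamma_1,T,\Gamma_2\vdash S=S')\Rightarrow(\Gamma_1,T',\Gamma_2\vdash S=S')$; (4b) $(\Gamma_1\vdash T=T')\wedge(\Gamma_1,T,\Gamma_2\vdash o=o':S)\Rightarrow(\Gamma_1,T',\Gamma_2\vdash o=o':S)$; (4c) $(\Gamma\vdash S=S')\wedge(\Gamma\vdash o=o':S)\Rightarrow(\Gamma\vdash o=o':S')$; (5a) $(\Gamma_1,T\rhd)\wedge(\Gamma_1,\Gamma_2\vdash S=S')\Rightarrow(\Gamma_1,T,t_{i+1}\Gamma_2\vdash t_{i+1}S=t_{i+1}S')$; (5b) $(\Gamma_1,T\rhd)\wedge(\Gamma_1,\Gamma_2\vdash o=o':S)\Rightarrow(\Gamma_1,T,t_{i+1}\Gamma_2\vdash t_{i+1}o=t_{i+1}o':t_{i+1}S)$; (6a) $(\Gamma_1,T,\Gamma_2\vdash S=S')\wedge(\Gamma_1\vdash r:T)\Rightarrow(\Gamma_1,s_{i+1}(\Gamma_2[r/i+1])\vdash s_{i+1}(S[r/i+1])=s_{i+1}(S'[r/i+1]))$;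 (6b) $(\Gamma_1,T,\Gamma_2\vdash o=o':S)\wedge(\Gamma_1\vdash r:T)\Rightarrow(\Gamma_1,s_{i+1}(\Gamma_2[r/i+1])\vdash s_{i+1}(o[r/i+1])=s_{i+1}(o'[r/i+1]):s_{i+1}(S[r/i+1]))$; (7a) $(\Gamma_1,T,\Gamma_2,S\rhd)\wedge(\Gamma_1\vdash r=r':T)\Rightarrow(\Gamma_1,s_{i+1}(\Gamma_2[r/i+1])\vdash s_{i+1}(S[r/i+1])=s_{i+1}(S[r'/i+1]))$; (7b) $(\Gamma_1,T,\Gamma_2\vdash o:S)\wedge(\Gamma_1\vdash r=r':T)\Rightarrow(\Gamma_1,s_{i+1}(\Gamma_2[r/i+1])\vdash s_{i+1}(o[r/i+1])=s_{i+1}(o[r'/i+1]):s_{i+1}(S[r/i+1]))$. Then the relations $\sim$ on $C$ and $\simeq$ on $\widetilde C$ defined below are equivalence relations which form a regular congruence relation on the C-subsystem of $CC(R,LM)$ determined by $(C,\widetilde C)$, i.e. they satisfy conditions (a)–(f) listed below.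
   Context: Notation: $[n]=\{1,\dots,n\}$. $R$ is a monad on Sets (unit $\eta$, Kleisli extension $\mathrm{bind}$, monad laws $\mathrm{bind}(\eta_X)=\mathrm{id}$, $\mathrm{bind}(f)\circ\eta_X=f$, $\mathrm{bind}(\mathrm{bind}(g)\circ f)=\mathrm{bind}(g)\circ\mathrm{bind}(f)$); $LM$ is a left $R$-module: functor with $\rho(f):LM(X)\to LM(Y)$ for $f:X\to R(Y)$, $\rho(\eta_X)=\mathrm{id}$, $\rho(g)\circ\rho(f)=\rho(\mathrm{bind}(g)\circ f)$. Elements of $Y$ are regarded in $R(Y)$ via $\eta_Y$; $E(f_1/1,\dots,f_m/m)$ is $\rho(f)(E)$ (for $E\in LM([m])$) or $\mathrm{bind}(f)(E)$ (for $E\in R([m])$), $f(i)=f_i$. For $E\in LM([m])$ or $R([m])$, $m\ge n$: $t_{n+1}E:=E(1/1,\dots,n/n,n+2/n+1,\dots,m+1/m)$; for $m\ge n+1$, $s\in R([n])$: $s_{n+1}(E[s/n+1]):=E(1/1,\dots,n/n,s/n+1,n+1/n+2,\dots,m-1/m)$ (an element of $LM([m-1])$ resp. $R([m-1])$). These are applied componentwise to sequences $\Delta=(D_1,\dots,D_k)$. Judgement notation: contexts are sequences $\Gamma=(T_1,\dots,T_n)$ with $T_j\in LM([j-1])$, $l(\Gamma)=n$, $ft(T_1,\dots,T_n)=(T_1,\dots,T_{n-1})$; commas denote concatenation. $(\Gamma\rhd)$ means $\Gamma\in C$; $(\Gamma\vdash t:T)$ ($T\in LM([n])$, $t\in R([n])$)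 means $(\Gamma,T,t)\in\widetilde C$; $(\Gamma\vdash S=S')$ ($S,S'\in LM([n])$) means $(\Gamma,S,S')\in Ceq$; $(\Gamma\vdash o=o':S)$ ($o,o'\in R([n])$) means $(\Gamma,S,o,o')\in\widetilde{Ceq}$. For $\mathcal J=(\Gamma\vdash t:T)\in\widetilde C$, $\partial(\mathcal J)=(\Gamma,T)$. Relations: for $\Gamma=(T_1,\dots,T_n),\Gamma'=(T'_1,\dots,T'_n)\in C$ (same length), $\Gamma\sim\Gamma'$ iff $n=0$, or $ft(\Gamma)\sim ft(\Gamma')$ and $(T_1,\dots,T_{n-1}\vdash T_n=T'_n)$ (defined recursively; sequences of different lengths are not related). For $(\Gamma\vdash o:S),(\Gamma'\vdash o':S')\in\widetilde C$: $(\Gamma\vdash o:S)\simeq(\Gamma'\vdash o':S')$ iff $(\Gamma,S)\sim(\Gamma',S')$ and $(\Gamma\vdash o=o':S)$. Operations of $CC(R,LM)$ (with $n=l(\Gamma)$): $T((\Gamma,T),(\Gamma,\Delta))=(\Gamma,T,t_{n+1}\Delta)$; $\widetilde T((\Gamma,T),(\Gamma,\Delta\vdash r:R))=(\Gamma,T,t_{n+1}\Delta\vdash t_{n+1}r:t_{n+1}R)$; $S((\Gamma\vdash s:S),(\Gamma,S,\Delta))=(\Gamma,s_{n+1}(\Delta[s/n+1]))$; $\widetilde S((\Gamma\vdash s:S),(\Gamma,S,\Delta\vdash r:R))=(\Gamma,s_{n+1}(\Delta[s/n+1])\vdash s_{n+1}(r[s/n+1]):s_{n+1}(R[s/n+1]))$;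 $\delta(\Gamma,T)=(\Gamma,T\vdash n+1:t_{n+1}T)$. Regular congruence conditions for relations $\sim$ on $C$, $\simeq$ on $\widetilde C$: (a) both are equivalence relations; (b) $\Gamma\sim\Gamma'$ implies $l(\Gamma)=l(\Gamma')$ and $ft(\Gamma)\sim ft(\Gamma')$; (c) $\mathcal J\simeq\mathcal J'$ implies $\partial\mathcal J\sim\partial\mathcal J'$; (d) if $(\Gamma,T)\in C$, $\Gamma'\in C$ and $\Gamma\sim\Gamma'$, then there is $(\Gamma',T')\in C$ with $(\Gamma,T)\sim(\Gamma',T')$; (e) if $\mathcal J\in\widetilde C$, $F\in C$ and $\partial\mathcal J\sim F$, then there is $\mathcal J'\in\widetilde C$ with $\partial\mathcal J'=F$ and $\mathcal J\simeq\mathcal J'$; (f) $\sim,\simeq$ are compatible with $T,\widetilde T,S,\widetilde S,\delta$: whenever the arguments lie in $C$/$\widetilde C$, are pairwise related by $\sim$/$\simeq$, and both applications are defined, the results are related by $\sim$ (for $T,S$) or $\simeq$ (for $\widetilde T,\widetilde S,\delta$). *)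

theory Defs
  imports Main
begin

text \<open>
  Monad R on Sets and left R-module LM, restricted to the standard finite sets
  [n] = {1..n}.  R([n]) is the carrier set RR n of elements of type 'r,
  LM([n]) is the carrier set LL n of elements of type 'l.
  eta k i  = eta_[k](i) in R([k])  (for i in [k]);
  bnd m k f x = bind(f)(x) for f : [m] -> R([k]) and x in R([m]);
  rho m k f E = rho(f)(E) for f : [m] -> R([k]) and E in LM([m]).
  Maps [m] -> R([k]) are represented as functions nat => 'r, only their values
  on {1..m} matter (extensionality).
\<close>

definition fin_monad ::
  "(nat \<Rightarrow> 'r set) \<Rightarrow> (nat \<Rightarrow> nat \<Rightarrow> 'r) \<Rightarrow>
   (nat \<Rightarrow> nat \<Rightarrow> (nat \<Rightarrow> 'r) \<Rightarrow> 'r \<Rightarrow> 'r) \<Rightarrow> bool" where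
  "fin_monad RR eta bnd \<longleftrightarrow>
     (\<forall>k i. i \<in> {1..k} \<longrightarrow> eta k i \<in> RR k) \<and>
     (\<forall>m k f x. (\<forall>j\<in>{1..m}. f j \<in> RR k) \<longrightarrow> x \<in> RR m \<longrightarrow> bnd m k f x \<in> RR k) \<and>
     (\<forall>m k f g x. (\<forall>i\<in>{1..m}. f i = g i) \<longrightarrow> x \<in> RR m \<longrightarrow> bnd m k f x = bnd m k g x) \<and>
     (\<forall>m x. x \<in> RR m \<longrightarrow> bnd m m (eta m) x = x) \<and>
     (\<forall>m k f i. (\<forall>j\<in>{1..m}. f j \<in> RR k) \<longrightarrow> i \<in> {1..m} \<longrightarrow> bnd m k f (eta m i) = f i) \<and>
     (\<forall>m k l f g x. (\<forall>j\<in>{1..m}. f j \<in> RR k) \<longrightarrow> (\<forall>j\<in>{1..k}. g j \<in> RR l) \<longrightarrow> x \<in> RR m \<longrightarrow>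
        bnd m l (\<lambda>i. bnd k l g (f i)) x = bnd k l g (bnd m k f x))"

definition fin_lmodule ::
  "(nat \<Rightarrow> 'r set) \<Rightarrow> (nat \<Rightarrow> nat \<Rightarrow> 'r) \<Rightarrow>
   (nat \<Rightarrow> nat \<Rightarrow> (nat \<Rightarrow> 'r) \<Rightarrow> 'r \<Rightarrow> 'r) \<Rightarrow>
   (nat \<Rightarrow> 'l set) \<Rightarrow> (nat \<Rightarrow> nat \<Rightarrow> (nat \<Rightarrow> 'r) \<Rightarrow> 'l \<Rightarrow> 'l) \<Rightarrow> bool" where
  "fin_lmodule RR eta bnd LL rho \<longleftrightarrow>
     (\<forall>m k f E. (\<forall>j\<in>{1..m}. f j \<in> RR k) \<longrightarrow> E \<in> LL m \<longrightarrow> rho m k f E \<in> LL k) \<and>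
     (\<forall>m k f g E. (\<forall>i\<in>{1..m}. f i = g i) \<longrightarrow> E \<in> LL m \<longrightarrow> rho m k f E = rho m k g E) \<and>
     (\<forall>m E. E \<in> LL m \<longrightarrow> rho m m (eta m) E = E) \<and>
     (\<forall>m k l f g E. (\<forall>j\<in>{1..m}. f j \<in> RR k) \<longrightarrow> (\<forall>j\<in>{1..k}. g j \<in> RR l) \<longrightarrow> E \<in> LL m \<longrightarrow>
        rho k l g (rho m k f E) = rho m l (\<lambda>i. bnd k l g (f i)) E)"

(* t_{n+1}E for E in LM([m]) / R([m]), m >= n *)
definition wkL where
  "wkL eta rho n m E = rho m (Suc m) (\<lambda>i. eta (Suc m) (if i \<le> n then i else Suc i)) E"
definition wkR where
  "wkR eta bnd n m E = bnd m (Suc m) (\<lambda>i. eta (Suc m) (if i \<le> n then i else Suc i)) E"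

(* the map [m] -> R([m-1]) : i |-> i (i<=n), s (i=n+1), i-1 (i>n+1);
   s in R([n]) is regarded in R([m-1]) via the inclusion [n] \<subseteq> [m-1] *)
definition sub_map where
  "sub_map eta bnd n s m = (\<lambda>i. if i \<le> n then eta (m - 1) i
       else if i = Suc n then bnd n (m - 1) (eta (m - 1)) s else eta (m - 1) (i - 1))"

(* s_{n+1}(E[s/n+1]) for E in LM([m]) / R([m]), m >= n+1, s in R([n]) *)
definition substL where
  "substL eta bnd rho n s m E = rho m (m - 1) (sub_map eta bnd n s m) E"
definition substR where
  "substR eta bnd n s m E = bnd m (m - 1) (sub_map eta bnd n s m) E"

(* componentwise on a sequence Delta following a context of length n:
   in (Gamma, Delta) the j-th (0-based) entry of Delta lies in LM([n+j]) *)
definition wkLs where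
  "wkLs eta rho n D = map (\<lambda>j. wkL eta rho n (n + j) (D ! j)) [0..<length D]"
(* in (Gamma, S, Delta) the j-th (0-based) entry of Delta lies in LM([n+1+j]) *)
definition substLs where
  "substLs eta bnd rho n s D = map (\<lambda>j. substL eta bnd rho n s (Suc n + j) (D ! j)) [0..<length D]"

(* (T_1,...,T_n) with T_j in LM([j-1]) *)
definition wfctx :: "(nat \<Rightarrow> 'l set) \<Rightarrow> 'l list \<Rightarrow> bool" where
  "wfctx LL G \<longleftrightarrow> (\<forall>j<length G. G ! j \<in> LL j)"

definition judgement_sets_typed where
  "judgement_sets_typed RR LL C Ct Ceq Cteq \<longleftrightarrow>
     C \<subseteq> {G. wfctx LL G} \<and>
     Ct \<subseteq> {(G, T, t). wfctx LL G \<and> T \<in> LL (length G) \<and> t \<in> RR (length G)} \<and>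
     Ceq \<subseteq> {(G, S, S'). wfctx LL G \<and> S \<in> LL (length G) \<and> S' \<in> LL (length G)} \<and>
     Cteq \<subseteq> {(G, S, x, y). wfctx LL G \<and> S \<in> LL (length G) \<and> x \<in> RR (length G) \<and> y \<in> RR (length G)}"

text \<open>Judgements: (G \<rhd>) is G \<in> C; (G |- t : T) is (G,T,t) \<in> Ct;
  (G |- S = S') is (G,S,S') \<in> Ceq; (G |- x = y : S) is (G,S,x,y) \<in> Cteq.\<close>

definition cond1 where
  "cond1 RR eta bnd LL rho C Ct \<longleftrightarrow>
     [] \<in> C \<and>
     (\<forall>G T. G @ [T] \<in> C \<longrightarrow> G \<in> C) \<and>
     (\<forall>G R r. (G, R, r) \<in> Ct \<longrightarrow> G @ [R] \<in> C) \<and>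
     (\<forall>G T D R r. G @ [T] \<in> C \<longrightarrow> (G @ D, R, r) \<in> Ct \<longrightarrow>
        (G @ [T] @ wkLs eta rho (length G) D,
         wkL eta rho (length G) (length G + length D) R,
         wkR eta bnd (length G) (length G + length D) r) \<in> Ct) \<and>
     (\<forall>G S s D R r. (G, S, s) \<in> Ct \<longrightarrow> (G @ [S] @ D, R, r) \<in> Ct \<longrightarrow>
        (G @ substLs eta bnd rho (length G) s D,
         substL eta bnd rho (length G) s (Suc (length G) + length D) R,
         substR eta bnd (length G) s (Suc (length G) + length D) r) \<in> Ct) \<and>
     (\<forall>G T. G @ [T] \<in> C \<longrightarrow>
        (G @ [T], wkL eta rho (length G) (length G) T, eta (Suc (length G)) (Suc (length G))) \<in> Ct)"

definition cond2 where
  "cond2 C Ceq \<longleftrightarrow>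
     (\<forall>G T T'. (G, T, T') \<in> Ceq \<longrightarrow> G @ [T] \<in> C) \<and>
     (\<forall>G T. G @ [T] \<in> C \<longrightarrow> (G, T, T) \<in> Ceq) \<and>
     (\<forall>G T T'. (G, T, T') \<in> Ceq \<longrightarrow> (G, T', T) \<in> Ceq) \<and>
     (\<forall>G T T' T''. (G, T, T') \<in> Ceq \<longrightarrow> (G, T', T'') \<in> Ceq \<longrightarrow> (G, T, T'') \<in> Ceq)"

definition cond3 where
  "cond3 Ct Cteq \<longleftrightarrow>
     (\<forall>G T x y. (G, T, x, y) \<in> Cteq \<longrightarrow> (G, T, x) \<in> Ct) \<and>
     (\<forall>G T x. (G, T, x) \<in> Ct \<longrightarrow> (G, T, x, x) \<in> Cteq) \<and>
     (\<forall>G T x y. (G, T, x, y) \<in> Cteq \<longrightarrow> (G, T, y, x) \<in> Cteq) \<and>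
     (\<forall>G T x y z. (G, T, x, y) \<in> Cteq \<longrightarrow> (G, T, y, z) \<in> Cteq \<longrightarrow> (G, T, x, z) \<in> Cteq)"

definition cond4 where
  "cond4 Ceq Cteq \<longleftrightarrow>
     (\<forall>G1 T T' G2 S S'. (G1, T, T') \<in> Ceq \<longrightarrow> (G1 @ [T] @ G2, S, S') \<in> Ceq \<longrightarrow>
        (G1 @ [T'] @ G2, S, S') \<in> Ceq) \<and>
     (\<forall>G1 T T' G2 S x y. (G1, T, T') \<in> Ceq \<longrightarrow> (G1 @ [T] @ G2, S, x, y) \<in> Cteq \<longrightarrow>
        (G1 @ [T'] @ G2, S, x, y) \<in> Cteq) \<and>
     (\<forall>G S S' x y. (G, S, S') \<in> Ceq \<longrightarrow> (G, S, x, y) \<in> Cteq \<longrightarrow> (G, S', x, y) \<in> Cteq)"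

definition cond5 where
  "cond5 eta bnd rho C Ceq Cteq \<longleftrightarrow>
     (\<forall>G1 T G2 S S'. G1 @ [T] \<in> C \<longrightarrow> (G1 @ G2, S, S') \<in> Ceq \<longrightarrow>
        (G1 @ [T] @ wkLs eta rho (length G1) G2,
         wkL eta rho (length G1) (length G1 + length G2) S,
         wkL eta rho (length G1) (length G1 + length G2) S') \<in> Ceq) \<and>
     (\<forall>G1 T G2 S x y. G1 @ [T] \<in> C \<longrightarrow> (G1 @ G2, S, x, y) \<in> Cteq \<longrightarrow>
        (G1 @ [T] @ wkLs eta rho (length G1) G2,
         wkL eta rho (length G1) (length G1 + length G2) S,
         wkR eta bnd (length G1) (length G1 + length G2) x,
         wkR eta bnd (length G1) (length G1 + length G2) y) \<in> Cteq)"

definition cond6 where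
  "cond6 eta bnd rho Ct Ceq Cteq \<longleftrightarrow>
     (\<forall>G1 T G2 S S' r. (G1 @ [T] @ G2, S, S') \<in> Ceq \<longrightarrow> (G1, T, r) \<in> Ct \<longrightarrow>
        (G1 @ substLs eta bnd rho (length G1) r G2,
         substL eta bnd rho (length G1) r (Suc (length G1) + length G2) S,
         substL eta bnd rho (length G1) r (Suc (length G1) + length G2) S') \<in> Ceq) \<and>
     (\<forall>G1 T G2 S x y r. (G1 @ [T] @ G2, S, x, y) \<in> Cteq \<longrightarrow> (G1, T, r) \<in> Ct \<longrightarrow>
        (G1 @ substLs eta bnd rho (length G1) r G2,
         substL eta bnd rho (length G1) r (Suc (length G1) + length G2) S,
         substR eta bnd (length G1) r (Suc (length G1) + length G2) x,
         substR eta bnd (length G1) r (Suc (length G1) + length G2) y) \<in> Cteq)"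

definition cond7 where
  "cond7 eta bnd rho C Ct Ceq Cteq \<longleftrightarrow>
     (\<forall>G1 T G2 S r r'. G1 @ [T] @ G2 @ [S] \<in> C \<longrightarrow> (G1, T, r, r') \<in> Cteq \<longrightarrow>
        (G1 @ substLs eta bnd rho (length G1) r G2,
         substL eta bnd rho (length G1) r (Suc (length G1) + length G2) S,
         substL eta bnd rho (length G1) r' (Suc (length G1) + length G2) S) \<in> Ceq) \<and>
     (\<forall>G1 T G2 S x r r'. (G1 @ [T] @ G2, S, x) \<in> Ct \<longrightarrow> (G1, T, r, r') \<in> Cteq \<longrightarrow>
        (G1 @ substLs eta bnd rho (length G1) r G2,
         substL eta bnd rho (length G1) r (Suc (length G1) + length G2) S,
         substR eta bnd (length G1) r (Suc (length G1) + length G2) x,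
         substR eta bnd (length G1) r' (Suc (length G1) + length G2) x) \<in> Cteq)"

function ctx_sim :: "('l list \<times> 'l \<times> 'l) set \<Rightarrow> 'l list \<Rightarrow> 'l list \<Rightarrow> bool" where
  "ctx_sim Ceq G G' =
     (if G = [] \<or> G' = [] then G = [] \<and> G' = []
      else ctx_sim Ceq (butlast G) (butlast G') \<and> (butlast G, last G, last G') \<in> Ceq)"
  by auto
termination by (relation "measure (\<lambda>(_, G, _). length G)") auto

declare ctx_sim.simps [simp del]

definition ctx_rel where
  "ctx_rel C Ceq G G' \<longleftrightarrow> G \<in> C \<and> G' \<in> C \<and> ctx_sim Ceq G G'"

definition bdry :: "'l list \<times> 'l \<times> 'r \<Rightarrow> 'l list" where
  "bdry J = fst J @ [fst (snd J)]"

definition tm_rel where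
  "tm_rel C Ct Ceq Cteq J J' \<longleftrightarrow> J \<in> Ct \<and> J' \<in> Ct \<and> ctx_rel C Ceq (bdry J) (bdry J') \<and>
     (fst J, fst (snd J), snd (snd J), snd (snd J')) \<in> Cteq"

definition opT where
  "opT eta rho G T D = G @ [T] @ wkLs eta rho (length G) D"
definition opTt where
  "opTt eta bnd rho G T D R r =
     (G @ [T] @ wkLs eta rho (length G) D,
      wkL eta rho (length G) (length G + length D) R,
      wkR eta bnd (length G) (length G + length D) r)"
definition opS where
  "opS eta bnd rho G s D = G @ substLs eta bnd rho (length G) s D"
definition opSt where
  "opSt eta bnd rho G s D R r =
     (G @ substLs eta bnd rho (length G) s D,
      substL eta bnd rho (length G) s (Suc (length G) + length D) R,
      substR eta bnd (length G) s (Suc (length G) + length D) r)"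
definition opdelta where
  "opdelta eta rho G T = (G @ [T], wkL eta rho (length G) (length G) T, eta (Suc (length G)) (Suc (length G)))"

definition regular_congruence where
  "regular_congruence eta bnd rho C Ct sim tsim \<longleftrightarrow>
     \<comment> \<open>(a)\<close>
     equiv C {(G, G'). sim G G'} \<and> equiv Ct {(J, J'). tsim J J'} \<and>
     \<comment> \<open>(b)\<close>
     (\<forall>G G'. sim G G' \<longrightarrow> length G = length G' \<and> sim (butlast G) (butlast G')) \<and>
     \<comment> \<open>(c)\<close>
     (\<forall>J J'. tsim J J' \<longrightarrow> sim (bdry J) (bdry J')) \<and>
     \<comment> \<open>(d)\<close>
     (\<forall>G T G'. G @ [T] \<in> C \<longrightarrow> G' \<in> C \<longrightarrow> sim G G' \<longrightarrow>
        (\<exists>T'. G' @ [T'] \<in> C \<and> sim (G @ [T]) (G' @ [T']))) \<and>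
     \<comment> \<open>(e)\<close>
     (\<forall>J F. J \<in> Ct \<longrightarrow> F \<in> C \<longrightarrow> sim (bdry J) F \<longrightarrow>
        (\<exists>J'. J' \<in> Ct \<and> bdry J' = F \<and> tsim J J')) \<and>
     \<comment> \<open>(f) compatibility with T\<close>
     (\<forall>G T D G' T' D'. G @ [T] \<in> C \<longrightarrow> G @ D \<in> C \<longrightarrow> G' @ [T'] \<in> C \<longrightarrow> G' @ D' \<in> C \<longrightarrow>
        sim (G @ [T]) (G' @ [T']) \<longrightarrow> sim (G @ D) (G' @ D') \<longrightarrow>
        sim (opT eta rho G T D) (opT eta rho G' T' D')) \<and>
     \<comment> \<open>(f) compatibility with ~T\<close>
     (\<forall>G T D R r G' T' D' R' r'. G @ [T] \<in> C \<longrightarrow> (G @ D, R, r) \<in> Ct \<longrightarrow>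
        G' @ [T'] \<in> C \<longrightarrow> (G' @ D', R', r') \<in> Ct \<longrightarrow>
        sim (G @ [T]) (G' @ [T']) \<longrightarrow> tsim (G @ D, R, r) (G' @ D', R', r') \<longrightarrow>
        tsim (opTt eta bnd rho G T D R r) (opTt eta bnd rho G' T' D' R' r')) \<and>
     \<comment> \<open>(f) compatibility with S\<close>
     (\<forall>G S s D G' S' s' D'. (G, S, s) \<in> Ct \<longrightarrow> G @ [S] @ D \<in> C \<longrightarrow>
        (G', S', s') \<in> Ct \<longrightarrow> G' @ [S'] @ D' \<in> C \<longrightarrow>
        tsim (G, S, s) (G', S', s') \<longrightarrow> sim (G @ [S] @ D) (G' @ [S'] @ D') \<longrightarrow>
        sim (opS eta bnd rho G s D) (opS eta bnd rho G' s' D')) \<and>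
     \<comment> \<open>(f) compatibility with ~S\<close>
     (\<forall>G S s D R r G' S' s' D' R' r'. (G, S, s) \<in> Ct \<longrightarrow> (G @ [S] @ D, R, r) \<in> Ct \<longrightarrow>
        (G', S', s') \<in> Ct \<longrightarrow> (G' @ [S'] @ D', R', r') \<in> Ct \<longrightarrow>
        tsim (G, S, s) (G', S', s') \<longrightarrow> tsim (G @ [S] @ D, R, r) (G' @ [S'] @ D', R', r') \<longrightarrow>
        tsim (opSt eta bnd rho G s D R r) (opSt eta bnd rho G' s' D' R' r')) \<and>
     \<comment> \<open>(f) compatibility with delta\<close>
     (\<forall>G T G' T'. G @ [T] \<in> C \<longrightarrow> G' @ [T'] \<in> C \<longrightarrow> sim (G @ [T]) (G' @ [T']) \<longrightarrow>
        tsim (opdelta eta rho G T) (opdelta eta rho G' T'))"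

end

theory Submission
  imports Defs
begin

text \<open>
  Two contexts are equivalent when they are componentwise judgmentally equal, each component
  being read in the prefix of the left-hand context.  Symmetry and transitivity of this relation
  need that equality judgements can be transported along equivalent contexts, which is rule (4a)
  applied one component at a time.  The operations T and S act componentwise on the extension
  \<Delta>, so their compatibility is proved by induction on \<Delta>: weakening is handled by (5), and
  substitution of equal terms for the variable by (6) followed by (7), glued by transitivity.
\<close>

lemma ctx_sim_Nil_left [simp]: "ctx_sim Ceq [] G' \<longleftrightarrow> G' = []"
  by (subst ctx_sim.simps) auto

lemma ctx_sim_Nil_right [simp]: "ctx_sim Ceq G [] \<longleftrightarrow> G = []"
  by (subst ctx_sim.simps) auto

lemma ctx_sim_snoc [simp]:
  "ctx_sim Ceq (G @ [T]) (G' @ [T']) \<longleftrightarrow> ctx_sim Ceq G G' \<and> (G, T, T') \<in> Ceq"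
  by (subst ctx_sim.simps) auto

lemma ctx_sim_snoc_leftE:
  assumes "ctx_sim Ceq (G @ [T]) H"
  obtains G' T' where "H = G' @ [T']" "ctx_sim Ceq G G'" "(G, T, T') \<in> Ceq"
  using assms by (cases H rule: rev_cases) auto

lemma ctx_sim_length: "ctx_sim Ceq G G' \<Longrightarrow> length G = length G'"
  by (induction G arbitrary: G' rule: rev_induct) (auto elim: ctx_sim_snoc_leftE)

lemma wkLs_Nil [simp]: "wkLs eta rho n [] = []"
  by (simp add: wkLs_def)

lemma wkLs_snoc [simp]:
  "wkLs eta rho n (D @ [R]) = wkLs eta rho n D @ [wkL eta rho n (n + length D) R]"
  by (auto simp: wkLs_def nth_append intro!: nth_equalityI)

lemma length_wkLs [simp]: "length (wkLs eta rho n D) = length D"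
  by (simp add: wkLs_def)

lemma substLs_Nil [simp]: "substLs eta bnd rho n s [] = []"
  by (simp add: substLs_def)

lemma substLs_snoc [simp]:
  "substLs eta bnd rho n s (D @ [R]) =
     substLs eta bnd rho n s D @ [substL eta bnd rho n s (Suc n + length D) R]"
  by (auto simp: substLs_def nth_append intro!: nth_equalityI)

lemma length_substLs [simp]: "length (substLs eta bnd rho n s D) = length D"
  by (simp add: substLs_def)

locale judgement_system =
  fixes RR :: "nat \<Rightarrow> 'r set"
    and eta :: "nat \<Rightarrow> nat \<Rightarrow> 'r"
    and bnd :: "nat \<Rightarrow> nat \<Rightarrow> (nat \<Rightarrow> 'r) \<Rightarrow> 'r \<Rightarrow> 'r"
    and LL :: "nat \<Rightarrow> 'l set"
    and rho :: "nat \<Rightarrow> nat \<Rightarrow> (nat \<Rightarrow> 'r) \<Rightarrow> 'l \<Rightarrow> 'l"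
    and C :: "'l list set"
    and Ct :: "('l list \<times> 'l \<times> 'r) set"
    and Ceq :: "('l list \<times> 'l \<times> 'l) set"
    and Cteq :: "('l list \<times> 'l \<times> 'r \<times> 'r) set"
  assumes cond1: "cond1 RR eta bnd LL rho C Ct"
    and cond2: "cond2 C Ceq"
    and cond3: "cond3 Ct Cteq"
    and cond4: "cond4 Ceq Cteq"
    and cond5: "cond5 eta bnd rho C Ceq Cteq"
    and cond6: "cond6 eta bnd rho Ct Ceq Cteq"
    and cond7: "cond7 eta bnd rho C Ct Ceq Cteq"
begin

lemma Nil_in_C: "[] \<in> C"
  and snoc_in_CD: "G @ [T] \<in> C \<Longrightarrow> G \<in> C"
  and Ct_bdry_in_C: "(G, S, x) \<in> Ct \<Longrightarrow> G @ [S] \<in> C"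
  and Ct_var: "G @ [T] \<in> C \<Longrightarrow>
     (G @ [T], wkL eta rho (length G) (length G) T, eta (Suc (length G)) (Suc (length G))) \<in> Ct"
  using cond1 unfolding cond1_def by blast+

lemma Ceq_in_C: "(G, T, T') \<in> Ceq \<Longrightarrow> G @ [T] \<in> C"
  and Ceq_refl: "G @ [T] \<in> C \<Longrightarrow> (G, T, T) \<in> Ceq"
  and Ceq_sym: "(G, T, T') \<in> Ceq \<Longrightarrow> (G, T', T) \<in> Ceq"
  and Ceq_trans: "(G, T, T') \<in> Ceq \<Longrightarrow> (G, T', T'') \<in> Ceq \<Longrightarrow> (G, T, T'') \<in> Ceq"
  using cond2 unfolding cond2_def by blast+

lemma Cteq_in_Ct: "(G, S, x, y) \<in> Cteq \<Longrightarrow> (G, S, x) \<in> Ct"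
  and Cteq_refl: "(G, S, x) \<in> Ct \<Longrightarrow> (G, S, x, x) \<in> Cteq"
  and Cteq_sym: "(G, S, x, y) \<in> Cteq \<Longrightarrow> (G, S, y, x) \<in> Cteq"
  and Cteq_trans: "(G, S, x, y) \<in> Cteq \<Longrightarrow> (G, S, y, z) \<in> Cteq \<Longrightarrow> (G, S, x, z) \<in> Cteq"
  using cond3 unfolding cond3_def by blast+

lemma Ceq_conv_ctx:
    "(G1, T, T') \<in> Ceq \<Longrightarrow> (G1 @ [T] @ G2, S, S') \<in> Ceq \<Longrightarrow> (G1 @ [T'] @ G2, S, S') \<in> Ceq"
  and Cteq_conv_ctx:
    "(G1, T, T') \<in> Ceq \<Longrightarrow> (G1 @ [T] @ G2, S, x, y) \<in> Cteq \<Longrightarrow> (G1 @ [T'] @ G2, S, x, y) \<in> Cteq"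
  and Cteq_conv_type: "(G, S, S') \<in> Ceq \<Longrightarrow> (G, S, x, y) \<in> Cteq \<Longrightarrow> (G, S', x, y) \<in> Cteq"
  using cond4 unfolding cond4_def by blast+

lemma Ceq_weaken: "G @ [T] \<in> C \<Longrightarrow> (G @ D, S, S') \<in> Ceq \<Longrightarrow>
    (G @ [T] @ wkLs eta rho (length G) D,
     wkL eta rho (length G) (length G + length D) S,
     wkL eta rho (length G) (length G + length D) S') \<in> Ceq"
  and Cteq_weaken: "G @ [T] \<in> C \<Longrightarrow> (G @ D, S, x, y) \<in> Cteq \<Longrightarrow>
    (G @ [T] @ wkLs eta rho (length G) D,
     wkL eta rho (length G) (length G + length D) S,
     wkR eta bnd (length G) (length G + length D) x,
     wkR eta bnd (length G) (length G + length D) y) \<in> Cteq"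
  using cond5 unfolding cond5_def by blast+

lemma Ceq_subst: "(G @ [T] @ D, S, S') \<in> Ceq \<Longrightarrow> (G, T, r) \<in> Ct \<Longrightarrow>
    (G @ substLs eta bnd rho (length G) r D,
     substL eta bnd rho (length G) r (Suc (length G) + length D) S,
     substL eta bnd rho (length G) r (Suc (length G) + length D) S') \<in> Ceq"
  and Cteq_subst: "(G @ [T] @ D, S, x, y) \<in> Cteq \<Longrightarrow> (G, T, r) \<in> Ct \<Longrightarrow>
    (G @ substLs eta bnd rho (length G) r D,
     substL eta bnd rho (length G) r (Suc (length G) + length D) S,
     substR eta bnd (length G) r (Suc (length G) + length D) x,
     substR eta bnd (length G) r (Suc (length G) + length D) y) \<in> Cteq"
  using cond6 unfolding cond6_def by blast+

lemma Ceq_subst_cong: "G @ [T] @ D @ [S] \<in> C \<Longrightarrow> (G, T, r, r') \<in> Cteq \<Longrightarrow>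
    (G @ substLs eta bnd rho (length G) r D,
     substL eta bnd rho (length G) r (Suc (length G) + length D) S,
     substL eta bnd rho (length G) r' (Suc (length G) + length D) S) \<in> Ceq"
  and Cteq_subst_cong: "(G @ [T] @ D, S, x) \<in> Ct \<Longrightarrow> (G, T, r, r') \<in> Cteq \<Longrightarrow>
    (G @ substLs eta bnd rho (length G) r D,
     substL eta bnd rho (length G) r (Suc (length G) + length D) S,
     substR eta bnd (length G) r (Suc (length G) + length D) x,
     substR eta bnd (length G) r' (Suc (length G) + length D) x) \<in> Cteq"
  using cond7 unfolding cond7_def by blast+

lemma ctx_sim_in_C: "ctx_sim Ceq G G' \<Longrightarrow> G \<in> C"
  by (cases G rule: rev_cases) (auto simp: Nil_in_C elim: ctx_sim_snoc_leftE intro: Ceq_in_C)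

lemma ctx_sim_refl: "G \<in> C \<Longrightarrow> ctx_sim Ceq G G"
  by (induction G rule: rev_induct) (auto intro: snoc_in_CD Ceq_refl)

lemma Ceq_ctx_sim:
  "ctx_sim Ceq G G' \<Longrightarrow> (G' @ D, S, S') \<in> Ceq \<Longrightarrow> (G @ D, S, S') \<in> Ceq"
proof (induction G arbitrary: G' D rule: rev_induct)
  case (snoc T G)
  then obtain G0' T' where "G' = G0' @ [T']" "ctx_sim Ceq G G0'" "(G, T, T') \<in> Ceq"
    by (auto elim: ctx_sim_snoc_leftE)
  with snoc show ?case
    using snoc.IH[of G0' "[T'] @ D"] by (auto intro: Ceq_conv_ctx[of _ T' T, simplified] Ceq_sym)
qed simp

lemma Cteq_ctx_sim:
  "ctx_sim Ceq G G' \<Longrightarrow> (G' @ D, S, x, y) \<in> Cteq \<Longrightarrow> (G @ D, S, x, y) \<in> Cteq"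
proof (induction G arbitrary: G' D rule: rev_induct)
  case (snoc T G)
  then obtain G0' T' where "G' = G0' @ [T']" "ctx_sim Ceq G G0'" "(G, T, T') \<in> Ceq"
    by (auto elim: ctx_sim_snoc_leftE)
  with snoc show ?case
    using snoc.IH[of G0' "[T'] @ D"] by (auto intro: Cteq_conv_ctx[of _ T' T, simplified] Ceq_sym)
qed simp

lemma ctx_sim_sym: "ctx_sim Ceq G G' \<Longrightarrow> ctx_sim Ceq G' G"
proof (induction G arbitrary: G' rule: rev_induct)
  case (snoc T G)
  then obtain G0' T' where G': "G' = G0' @ [T']" and "ctx_sim Ceq G G0'" "(G, T, T') \<in> Ceq"
    by (auto elim: ctx_sim_snoc_leftE)
  moreover from this have "ctx_sim Ceq G0' G"
    using snoc.IH by blast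
  ultimately show ?case
    using Ceq_ctx_sim[of G0' G "[]"] by (auto intro: Ceq_sym)
qed simp

lemma ctx_sim_trans: "ctx_sim Ceq G G' \<Longrightarrow> ctx_sim Ceq G' G'' \<Longrightarrow> ctx_sim Ceq G G''"
proof (induction G arbitrary: G' G'' rule: rev_induct)
  case (snoc T G)
  then obtain G0' T' where G': "G' = G0' @ [T']" and "ctx_sim Ceq G G0'" "(G, T, T') \<in> Ceq"
    by (auto elim: ctx_sim_snoc_leftE)
  moreover obtain G0'' T'' where "G'' = G0'' @ [T'']" "ctx_sim Ceq G0' G0''" "(G0', T', T'') \<in> Ceq"
    using snoc.prems(2) G' by (auto elim: ctx_sim_snoc_leftE)
  ultimately show ?case
    using snoc.IH Ceq_ctx_sim[of G G0' "[]"] by (auto intro: Ceq_trans)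
qed simp

lemma ctx_rel_iff_ctx_sim: "ctx_rel C Ceq G G' \<longleftrightarrow> ctx_sim Ceq G G'"
  unfolding ctx_rel_def using ctx_sim_in_C ctx_sim_sym by blast

lemma Cteq_ctx_sim_snoc:
  assumes "ctx_sim Ceq (G @ [S]) (G' @ [S'])" and "(G, S, x, y) \<in> Cteq"
  shows "(G', S', x, y) \<in> Cteq"
proof -
  from assms(1) have "ctx_sim Ceq G' G" and "(G, S, S') \<in> Ceq"
    by (auto intro: ctx_sim_sym)
  then have "(G', S, S') \<in> Ceq" and "(G', S, x, y) \<in> Cteq"
    using assms(2) Ceq_ctx_sim[of G' G "[]"] Cteq_ctx_sim[of G' G "[]"] by simp_all
  then show ?thesis
    by (rule Cteq_conv_type)
qed

lemma tm_rel_iff: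
  "tm_rel C Ct Ceq Cteq (G, S, x) (G', S', x') \<longleftrightarrow>
     ctx_sim Ceq (G @ [S]) (G' @ [S']) \<and> (G, S, x, x') \<in> Cteq"
  using Cteq_ctx_sim_snoc[THEN Cteq_sym, THEN Cteq_in_Ct] Cteq_in_Ct
  unfolding tm_rel_def ctx_rel_iff_ctx_sim bdry_def by auto

lemma tm_rel_sym: "tm_rel C Ct Ceq Cteq J J' \<Longrightarrow> tm_rel C Ct Ceq Cteq J' J"
  by (cases J; cases J') (simp add: tm_rel_iff del: ctx_sim_snoc;
      blast intro: ctx_sim_sym Cteq_sym Cteq_ctx_sim_snoc)

lemma tm_rel_trans:
  "tm_rel C Ct Ceq Cteq J J' \<Longrightarrow> tm_rel C Ct Ceq Cteq J' J'' \<Longrightarrow> tm_rel C Ct Ceq Cteq J J''"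
proof (cases J; cases J'; cases J'')
  fix G S x G' S' x' G'' S'' x''
  assume J: "J = (G, S, x)" "J' = (G', S', x')" "J'' = (G'', S'', x'')"
    and "tm_rel C Ct Ceq Cteq J J'" "tm_rel C Ct Ceq Cteq J' J''"
  then have "ctx_sim Ceq (G @ [S]) (G' @ [S'])" "(G, S, x, x') \<in> Cteq"
    and "ctx_sim Ceq (G' @ [S']) (G'' @ [S''])" "(G', S', x', x'') \<in> Cteq"
    by (simp_all add: tm_rel_iff)
  then show ?thesis
    unfolding J tm_rel_iff
    by (blast intro: ctx_sim_trans ctx_sim_sym Cteq_trans Cteq_ctx_sim_snoc)
qed

lemma equiv_ctx_rel: "equiv C {(G, G'). ctx_rel C Ceq G G'}"
  by (rule equivI) (auto simp: ctx_rel_iff_ctx_sim intro!: refl_onI symI transI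
      ctx_sim_refl intro: ctx_sim_in_C ctx_sim_sym ctx_sim_trans)

lemma equiv_tm_rel: "equiv Ct {(J, J'). tm_rel C Ct Ceq Cteq J J'}"
proof (rule equivI)
  have "tm_rel C Ct Ceq Cteq J J" if "J \<in> Ct" for J
    using that by (cases J) (simp add: tm_rel_iff ctx_sim_refl Ct_bdry_in_C Cteq_refl del: ctx_sim_snoc)
  then show "refl_on Ct {(J, J'). tm_rel C Ct Ceq Cteq J J'}"
    by (auto intro!: refl_onI)
  show "{(J, J'). tm_rel C Ct Ceq Cteq J J'} \<subseteq> Ct \<times> Ct"
    by (auto simp: tm_rel_def)
  show "sym {(J, J'). tm_rel C Ct Ceq Cteq J J'}"
    by (auto intro!: symI intro: tm_rel_sym)
  show "trans {(J, J'). tm_rel C Ct Ceq Cteq J J'}"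
    by (auto intro!: transI intro: tm_rel_trans)
qed

lemma ctx_sim_butlast: "ctx_sim Ceq G G' \<Longrightarrow> ctx_sim Ceq (butlast G) (butlast G')"
  by (cases G rule: rev_cases) (auto elim: ctx_sim_snoc_leftE)

lemma ctx_sim_extend:
  assumes "G @ [T] \<in> C" and "ctx_sim Ceq G G'"
  shows "G' @ [T] \<in> C" and "ctx_sim Ceq (G @ [T]) (G' @ [T])"
proof -
  have "(G, T, T) \<in> Ceq"
    using assms(1) by (rule Ceq_refl)
  moreover from this have "(G', T, T) \<in> Ceq"
    using assms(2) ctx_sim_sym Ceq_ctx_sim[of G' G "[]"] by simp
  ultimately show "G' @ [T] \<in> C" and "ctx_sim Ceq (G @ [T]) (G' @ [T])"
    using assms(2) by (auto intro: Ceq_in_C)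
qed

lemma ctx_sim_wkLs:
  assumes "ctx_sim Ceq (G @ [T]) (G' @ [T'])" and "ctx_sim Ceq (G @ D) (G' @ D')"
  shows "ctx_sim Ceq (G @ [T] @ wkLs eta rho (length G) D) (G' @ [T'] @ wkLs eta rho (length G') D')"
proof -
  have lG: "length G' = length G"
    using ctx_sim_length[OF assms(1)] by simp
  with ctx_sim_length[OF assms(2)] have "length D = length D'"
    by simp
  then show ?thesis
    using assms(2)
  proof (induction D D' rule: rev_induct2)
    case (4 R D R' D')
    then show ?case
      using Ceq_weaken[OF ctx_sim_in_C[OF assms(1)], of D R R'] lG
      by (simp del: append_assoc append_Cons add: append_assoc[symmetric])
  qed (use assms(1) in auto)
qed

lemma ctx_sim_substLs:
  assumes "ctx_sim Ceq (G @ [S]) (G' @ [S'])" and "(G, S, s, s') \<in> Cteq"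
    and "ctx_sim Ceq (G @ [S] @ D) (G' @ [S'] @ D')"
  shows "ctx_sim Ceq (G @ substLs eta bnd rho (length G) s D) (G' @ substLs eta bnd rho (length G') s' D')"
proof -
  have lG: "length G' = length G"
    using ctx_sim_length[OF assms(1)] by simp
  with ctx_sim_length[OF assms(3)] have "length D = length D'"
    by simp
  then show ?thesis
    using assms(3)
  proof (induction D D' rule: rev_induct2)
    case (4 R D R' D')
    let ?n = "Suc (length G) + length D"
    from "4.prems" have "ctx_sim Ceq (G @ [S] @ D) (G' @ [S'] @ D')" and RR': "(G @ [S] @ D, R, R') \<in> Ceq"
      using ctx_sim_snoc[of Ceq "G @ [S] @ D" R "G' @ [S'] @ D'" R'] by simp_all
    moreover have "(G @ substLs eta bnd rho (length G) s D,
        substL eta bnd rho (length G) s ?n R, substL eta bnd rho (length G) s ?n R') \<in> Ceq"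
      using RR' Cteq_in_Ct[OF assms(2)] by (rule Ceq_subst)
    moreover have "G @ [S] @ D @ [R'] \<in> C"
      using Ceq_in_C[OF Ceq_sym[OF RR']] by simp
    then have "(G @ substLs eta bnd rho (length G) s D,
        substL eta bnd rho (length G) s ?n R', substL eta bnd rho (length G) s' ?n R') \<in> Ceq"
      using assms(2) by (rule Ceq_subst_cong)
    moreover have "length D = length D'"
      using "4.prems"(1) by simp
    ultimately show ?case
      using "4.IH" lG by (simp del: append_assoc append_Cons add: append_assoc[symmetric])
        (blast intro: Ceq_trans)
  qed (use assms(1) in auto)
qed

lemma tm_rel_lift_to_bdry:
  assumes "J \<in> Ct" and "ctx_sim Ceq (bdry J) F"
  shows "\<exists>J'. J' \<in> Ct \<and> bdry J' = F \<and> tm_rel C Ct Ceq Cteq J J'"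
proof -
  obtain G S x where J: "J = (G, S, x)"
    by (cases J)
  with assms(2) obtain G' S' where F: "F = G' @ [S']"
    by (auto simp: bdry_def elim: ctx_sim_snoc_leftE)
  have "tm_rel C Ct Ceq Cteq J (G', S', x)"
    using assms J F by (simp add: tm_rel_iff bdry_def Cteq_refl del: ctx_sim_snoc)
  then show ?thesis
    using F by (auto simp: tm_rel_def bdry_def)
qed

lemma tm_rel_opTt:
  assumes "ctx_sim Ceq (G @ [T]) (G' @ [T'])" and "tm_rel C Ct Ceq Cteq (G @ D, R, r) (G' @ D', R', r')"
  shows "tm_rel C Ct Ceq Cteq (opTt eta bnd rho G T D R r) (opTt eta bnd rho G' T' D' R' r')"
proof -
  have sim: "ctx_sim Ceq (G @ D @ [R]) (G' @ D' @ [R'])" and eq: "(G @ D, R, r, r') \<in> Cteq"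
    using assms(2) by (simp_all add: tm_rel_iff del: ctx_sim_snoc)
  have lG: "length G' = length G"
    using ctx_sim_length[OF assms(1)] by simp
  with ctx_sim_length[OF sim] have "length D' = length D"
    by simp
  moreover have "ctx_sim Ceq (G @ [T] @ wkLs eta rho (length G) (D @ [R]))
      (G' @ [T'] @ wkLs eta rho (length G') (D' @ [R']))"
    using ctx_sim_wkLs[OF assms(1), of "D @ [R]" "D' @ [R']"] sim by simp
  ultimately show ?thesis
    using Cteq_weaken[OF ctx_sim_in_C[OF assms(1)] eq] lG
    by (simp add: opTt_def tm_rel_iff del: ctx_sim_snoc)
qed

lemma tm_rel_opSt:
  assumes "tm_rel C Ct Ceq Cteq (G, S, s) (G', S', s')"
    and "tm_rel C Ct Ceq Cteq (G @ [S] @ D, R, r) (G' @ [S'] @ D', R', r')"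
  shows "tm_rel C Ct Ceq Cteq (opSt eta bnd rho G s D R r) (opSt eta bnd rho G' s' D' R' r')"
proof -
  let ?n = "Suc (length G) + length D"
  have simS: "ctx_sim Ceq (G @ [S]) (G' @ [S'])" and eqs: "(G, S, s, s') \<in> Cteq"
    using assms(1) by (simp_all add: tm_rel_iff del: ctx_sim_snoc)
  have sim: "ctx_sim Ceq (G @ [S] @ D @ [R]) (G' @ [S'] @ D' @ [R'])"
    and eq: "(G @ [S] @ D, R, r, r') \<in> Cteq"
    using assms(2) by (simp_all add: tm_rel_iff del: ctx_sim_snoc)
  have lG: "length G' = length G"
    using ctx_sim_length[OF simS] by simp
  with ctx_sim_length[OF sim] have "length D' = length D"
    by simp
  moreover have "ctx_sim Ceq (G @ substLs eta bnd rho (length G) s (D @ [R]))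
      (G' @ substLs eta bnd rho (length G') s' (D' @ [R']))"
    using ctx_sim_substLs[OF simS eqs, of "D @ [R]" "D' @ [R']"] sim by simp
  moreover have "(G @ substLs eta bnd rho (length G) s D, substL eta bnd rho (length G) s ?n R,
      substR eta bnd (length G) s ?n r, substR eta bnd (length G) s ?n r') \<in> Cteq"
    using eq Cteq_in_Ct[OF eqs] by (rule Cteq_subst)
  moreover have "(G @ substLs eta bnd rho (length G) s D, substL eta bnd rho (length G) s ?n R,
      substR eta bnd (length G) s ?n r', substR eta bnd (length G) s' ?n r') \<in> Cteq"
    using Cteq_in_Ct[OF Cteq_sym[OF eq]] eqs by (rule Cteq_subst_cong)
  ultimately show ?thesis
    using lG by (simp add: opSt_def tm_rel_iff del: ctx_sim_snoc) (blast intro: Cteq_trans)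
qed

lemma tm_rel_opdelta:
  assumes "ctx_sim Ceq (G @ [T]) (G' @ [T'])"
  shows "tm_rel C Ct Ceq Cteq (opdelta eta rho G T) (opdelta eta rho G' T')"
proof -
  have "ctx_sim Ceq (G @ [T] @ wkLs eta rho (length G) [T]) (G' @ [T'] @ wkLs eta rho (length G') [T'])"
    using ctx_sim_wkLs[OF assms assms] .
  moreover have "length G' = length G"
    using ctx_sim_length[OF assms] by simp
  ultimately show ?thesis
    using Cteq_refl[OF Ct_var[OF ctx_sim_in_C[OF assms]]]
    by (simp add: opdelta_def tm_rel_iff wkLs_def del: ctx_sim_snoc)
qed

lemma regular_congruence_ctx_rel_tm_rel:
  "regular_congruence eta bnd rho C Ct (ctx_rel C Ceq) (tm_rel C Ct Ceq Cteq)"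
  unfolding regular_congruence_def
proof (intro conjI allI impI equiv_ctx_rel equiv_tm_rel)
  fix G G' assume "ctx_rel C Ceq G G'"
  then show "length G = length G'" and "ctx_rel C Ceq (butlast G) (butlast G')"
    by (simp_all add: ctx_rel_iff_ctx_sim ctx_sim_length ctx_sim_butlast)
next
  fix J J' assume "tm_rel C Ct Ceq Cteq J J'"
  then show "ctx_rel C Ceq (bdry J) (bdry J')"
    by (simp add: tm_rel_def)
next
  fix G T G' assume "G @ [T] \<in> C" and "ctx_rel C Ceq G G'"
  then show "\<exists>T'. G' @ [T'] \<in> C \<and> ctx_rel C Ceq (G @ [T]) (G' @ [T'])"
    unfolding ctx_rel_iff_ctx_sim by (blast dest: ctx_sim_extend)
next
  fix G T D G' T' D'
  assume "ctx_rel C Ceq (G @ [T]) (G' @ [T'])" and "ctx_rel C Ceq (G @ D) (G' @ D')"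
  then show "ctx_rel C Ceq (opT eta rho G T D) (opT eta rho G' T' D')"
    unfolding ctx_rel_iff_ctx_sim opT_def by (rule ctx_sim_wkLs)
next
  fix J F assume "J \<in> Ct" and "ctx_rel C Ceq (bdry J) F"
  then show "\<exists>J'. J' \<in> Ct \<and> bdry J' = F \<and> tm_rel C Ct Ceq Cteq J J'"
    unfolding ctx_rel_iff_ctx_sim by (rule tm_rel_lift_to_bdry)
next
  fix G S s D G' S' s' D'
  assume "tm_rel C Ct Ceq Cteq (G, S, s) (G', S', s')"
    and "ctx_rel C Ceq (G @ [S] @ D) (G' @ [S'] @ D')"
  then show "ctx_rel C Ceq (opS eta bnd rho G s D) (opS eta bnd rho G' s' D')"
    unfolding ctx_rel_iff_ctx_sim opS_def tm_rel_iff by (blast intro: ctx_sim_substLs)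
qed (simp_all add: ctx_rel_iff_ctx_sim tm_rel_opTt tm_rel_opSt tm_rel_opdelta)

end

theorem proposition6p2:
  fixes RR :: "nat \<Rightarrow> 'r set"
    and eta :: "nat \<Rightarrow> nat \<Rightarrow> 'r"
    and bnd :: "nat \<Rightarrow> nat \<Rightarrow> (nat \<Rightarrow> 'r) \<Rightarrow> 'r \<Rightarrow> 'r"
    and LL :: "nat \<Rightarrow> 'l set"
    and rho :: "nat \<Rightarrow> nat \<Rightarrow> (nat \<Rightarrow> 'r) \<Rightarrow> 'l \<Rightarrow> 'l"
    and C :: "'l list set"
    and Ct :: "('l list \<times> 'l \<times> 'r) set"
    and Ceq :: "('l list \<times> 'l \<times> 'l) set"
    and Cteq :: "('l list \<times> 'l \<times> 'r \<times> 'r) set"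
  assumes "fin_monad RR eta bnd"
    and "fin_lmodule RR eta bnd LL rho"
    and "judgement_sets_typed RR LL C Ct Ceq Cteq"
    and "cond1 RR eta bnd LL rho C Ct"
    and "cond2 C Ceq"
    and "cond3 Ct Cteq"
    and "cond4 Ceq Cteq"
    and "cond5 eta bnd rho C Ceq Cteq"
    and "cond6 eta bnd rho Ct Ceq Cteq"
    and "cond7 eta bnd rho C Ct Ceq Cteq"
  shows "regular_congruence eta bnd rho C Ct (ctx_rel C Ceq) (tm_rel C Ct Ceq Cteq)"
proof -
  interpret judgement_system RR eta bnd LL rho C Ct Ceq Cteq
    using assms(4-10) by unfold_locales
  show ?thesis
    by (rule regular_congruence_ctx_rel_tm_rel)
qed

end
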